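(* Let $D \in \mathbb{N}^+$, let $\omega_0^{(1)},\dots,\omega_0^{(D)}>0$ be fundamental frequencies, and let $\mathcal{I} \subset \mathbb{Z}_{\ge 0}^D$ be a nonempty finite index set (for example an index set of some refinement $R$) with cardinality $C_{\mathcal{I}}=|\mathcal{I}|$. For $\mathbf{k}\in\mathcal{I}$ let $\eta(\mathbf{k})=\#\{d\in\{1,\dots,D\}: k_d\neq 0\}$. Let $\hat{\Phi}^{\text{mask}}_{\mathcal{I}}(\mathbf{x})$ be the sparse (masked) Index Set Fourier Series feature map and $\hat{\Phi}^{\text{full}}_{\mathcal{I}}(\mathbf{x})$ the full feature map described in the context. Then $$|\mathcal{I}| \;\le\; |\hat{\Phi}^{\text{mask}}_{\mathcal{I}}(\mathbf{x})| \;=\; \sum_{\mathbf{k}\in\mathcal{I}} 2^{\eta(\mathbf{k})} \;\le\; |\hat{\Phi}^{\text{full}}_{\mathcal{I}}(\mathbf{x})| \;\le\; C_{\mathcal{I}}\,2^{D}.$$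
   Context: For $\mathbf{k}=(k_1,\dots,k_D)\in\mathcal{I}$ let $\rho_{\mathbf{k}}=\prod_{d=1}^D q^{(d)}_{k_d}$ be a product of nonnegative per-dimension univariate Fourier series coefficients of the kernel being approximated, and $a_{\mathbf{k},d}=k_d\omega_0^{(d)}$. Full feature map: letting $\Xi^{(D)}$ be the $2^{D-1}$ sign vectors $\boldsymbol{\xi}\in\{+1,-1\}^D$ with $\xi_1=+1$, $\hat{\Phi}^{\text{full}}_{\mathcal{I}}(\mathbf{x})$ is the vector obtained by concatenating, over all $\mathbf{k}\in\mathcal{I}$ and $\boldsymbol{\xi}\in\Xi^{(D)}$, the two entries $\sqrt{\rho_{\mathbf{k}}/2^{D-1}}\cos(\sum_{d=1}^D a_{\mathbf{k},d}\xi_d x_d)$ and $\sqrt{\rho_{\mathbf{k}}/2^{D-1}}\sin(\sum_{d=1}^D a_{\mathbf{k},d}\xi_d x_d)$. Sparse (masked) feature map: for each $\mathbf{k}$, the factors $\cos(k_d\omega_0^{(d)}(x_d-x_d'))$ with $k_d=0$ in the product $\prod_{d=1}^D q^{(d)}_{k_d}\cos(k_d\omega_0^{(d)}(x_d-x'_d))$ are replaced by the constant $1$ (masking), and only the remaining $\eta(\mathbf{k})$ data-dependent cosine factors are expanded by repeated use of $\cos u\cos v=\tfrac12[\cos(u-v)+\cos(u+v)]$ and $\cos(u-v)=\cos u\cos v+\sin u\sin v$. Concretely, with $S(\mathbf{k})=\{d:k_d\neq 0\}$: if $S(\mathbf{k})=\emptyset$ the block for $\mathbf{k}$ is the single constant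 entry $\sqrt{\rho_{\mathbf{k}}}$; otherwise, letting $d_0=\min S(\mathbf{k})$, the block consists, for each sign vector $\mathbf{s}\in\{+1,-1\}^{S(\mathbf{k})}$ with $s_{d_0}=+1$, of the two entries $c\cos(\sum_{d\in S(\mathbf{k})}a_{\mathbf{k},d}s_dx_d)$ and $c\sin(\sum_{d\in S(\mathbf{k})}a_{\mathbf{k},d}s_dx_d)$ with a data-independent scaling $c=\sqrt{\rho_{\mathbf{k}}/2^{\eta(\mathbf{k})-1}}$. $\hat{\Phi}^{\text{mask}}_{\mathcal{I}}(\mathbf{x})$ is the concatenation of these blocks over $\mathbf{k}\in\mathcal{I}$. The cardinality $|\cdot|$ of a feature map means the number of its entries. *)

theory Defs
  imports Complex_Main "HOL-Library.List_Lexorder"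
begin

(* Conventions: dimensions are indexed 0..D-1 (list positions) instead of 1..D.
   A multi-index k is a nat list of length D, an input x a real list of length D.
   q d j  = univariate Fourier coefficient q^{(d)}_j ;  w0 d = omega_0^{(d)}. *)

fun signs :: "nat \<Rightarrow> real list list" where
  "signs 0 = [[]]"
| "signs (Suc n) = concat (map (\<lambda>s. [1 # s, (-1) # s]) (signs n))"

definition rho :: "(nat \<Rightarrow> nat \<Rightarrow> real) \<Rightarrow> nat list \<Rightarrow> real" where
  "rho q k = (\<Prod>d<length k. q d (k ! d))"

definition acoef :: "(nat \<Rightarrow> real) \<Rightarrow> nat list \<Rightarrow> nat \<Rightarrow> real" where
  "acoef w0 k d = real (k ! d) * w0 d"

definition eta :: "nat list \<Rightarrow> nat" where
  "eta k = card {d. d < length k \<and> k ! d \<noteq> 0}"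

definition enum_set :: "nat list set \<Rightarrow> nat list list" where
  "enum_set I = sorted_list_of_set I"

definition full_block ::
  "nat \<Rightarrow> (nat \<Rightarrow> nat \<Rightarrow> real) \<Rightarrow> (nat \<Rightarrow> real) \<Rightarrow> real list \<Rightarrow> nat list \<Rightarrow> real list" where
  "full_block D q w0 x k =
     (let c = sqrt (rho q k / 2 ^ (D - 1)) in
      concat (map (\<lambda>\<xi>. let u = (\<Sum>d<D. acoef w0 k d * (\<xi> ! d) * (x ! d)) in
                          [c * cos u, c * sin u])
                  (map (\<lambda>s. 1 # s) (signs (D - 1)))))"

definition Phi_full ::
  "nat \<Rightarrow> (nat \<Rightarrow> nat \<Rightarrow> real) \<Rightarrow> (nat \<Rightarrow> real) \<Rightarrow> nat list set \<Rightarrow> real list \<Rightarrow> real list" where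
  "Phi_full D q w0 I x = concat (map (full_block D q w0 x) (enum_set I))"

(* support S(k) as an increasing list of dimensions; its head is d0 = min S(k) *)
definition supp_list :: "nat list \<Rightarrow> nat list" where
  "supp_list k = filter (\<lambda>d. k ! d \<noteq> 0) [0..<length k]"

(* block of the masked feature map for one k; a sign vector s over S(k) is a list
   with s!j the sign of dimension (supp_list k)!j, and s!0 = +1 *)
definition mask_block ::
  "(nat \<Rightarrow> nat \<Rightarrow> real) \<Rightarrow> (nat \<Rightarrow> real) \<Rightarrow> real list \<Rightarrow> nat list \<Rightarrow> real list" where
  "mask_block q w0 x k =
     (let S = supp_list k; n = length S in
      if S = [] then [sqrt (rho q k)]
      else (let c = sqrt (rho q k / 2 ^ (n - 1)) in
            concat (map (\<lambda>s. let u = (\<Sum>j<n. acoef w0 k (S ! j) * (s ! j) * (x ! (S ! j))) in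
                               [c * cos u, c * sin u])
                        (map (\<lambda>s. 1 # s) (signs (n - 1))))))"

definition Phi_mask ::
  "(nat \<Rightarrow> nat \<Rightarrow> real) \<Rightarrow> (nat \<Rightarrow> real) \<Rightarrow> nat list set \<Rightarrow> real list \<Rightarrow> real list" where
  "Phi_mask q w0 I x = concat (map (mask_block q w0 x) (enum_set I))"

end

theory Submission
  imports Defs
begin

text \<open>Both feature maps are concatenations of one block per multi-index, each block being a
  list of cosine/sine pairs, one pair per sign vector with fixed first entry. Hence the block
  of \<open>k\<close> has length \<open>2 * 2^(n-1) = 2^n\<close>, with \<open>n = \<eta>(k)\<close> for the masked map and \<open>n = D\<close>
  for the full one (the empty support giving the single constant entry \<open>2^0\<close>), and the bounds
  follow from \<open>0 \<le> \<eta>(k) \<le> D\<close>.\<close>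

lemma length_signs: "length (signs n) = 2 ^ n"
proof (induction n)
  case (Suc n)
  have "length (concat (map (\<lambda>s. [1 # s, (-1) # s]) xs)) = 2 * length xs" for xs :: "real list list"
    by (induction xs) auto
  then show ?case using Suc by simp
qed simp

lemma length_concat_map_pairs:
  "(\<And>s. length (g s) = 2) \<Longrightarrow> length (concat (map g xs)) = 2 * length xs"
  by (induction xs) auto

lemma length_sign_pairs:
  assumes "n \<ge> 1" and "\<And>s. length (g s) = 2"
  shows "length (concat (map g (map ((#) 1) (signs (n - 1))))) = 2 ^ n"
proof -
  have "2 * 2 ^ (n - 1) = (2::nat) ^ n"
    using assms(1) by (simp add: power_eq_if)
  then show ?thesis
    using assms(2) by (simp add: length_concat_map_pairs length_signs)
qed

lemma length_supp_list: "length (supp_list k) = eta k"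
proof -
  have "length (supp_list k) = card (set (supp_list k))"
    unfolding supp_list_def by (metis distinct_card distinct_filter distinct_upt)
  also have "set (supp_list k) = {d. d < length k \<and> k ! d \<noteq> 0}"
    unfolding supp_list_def by auto
  finally show ?thesis unfolding eta_def .
qed

lemma eta_le_length: "eta k \<le> length k"
proof -
  have "eta k \<le> card {..<length k}" unfolding eta_def by (rule card_mono) auto
  then show ?thesis by simp
qed

lemma length_mask_block: "length (mask_block q w0 x k) = 2 ^ eta k"
proof (cases "supp_list k = []")
  case True
  then show ?thesis using length_supp_list[of k] unfolding mask_block_def by simp
next
  case False
  then have "length (supp_list k) \<ge> 1" by (cases "supp_list k") auto
  then show ?thesis
    using False unfolding mask_block_def Let_def length_supp_list[symmetric]
    by (simp only: if_False) (rule length_sign_pairs; simp)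
qed

lemma length_full_block: "D \<ge> 1 \<Longrightarrow> length (full_block D q w0 x k) = 2 ^ D"
  unfolding full_block_def Let_def by (rule length_sign_pairs) simp_all

lemma length_concat_enum_set:
  assumes "finite I"
  shows "length (concat (map f (enum_set I))) = (\<Sum>k\<in>I. length (f k))"
  using assms by (simp add: enum_set_def length_concat o_def sum_list_distinct_conv_sum_set)

lemma length_Phi_mask:
  "finite I \<Longrightarrow> length (Phi_mask q w0 I x) = (\<Sum>k\<in>I. 2 ^ eta k)"
  unfolding Phi_mask_def by (simp add: length_concat_enum_set length_mask_block)

lemma length_Phi_full:
  "finite I \<Longrightarrow> D \<ge> 1 \<Longrightarrow> length (Phi_full D q w0 I x) = card I * 2 ^ D"
  unfolding Phi_full_def by (simp add: length_concat_enum_set length_full_block)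

theorem lemma2:
  fixes D :: nat and w0 :: "nat \<Rightarrow> real" and q :: "nat \<Rightarrow> nat \<Rightarrow> real"
    and I :: "nat list set" and x :: "real list"
  assumes "D \<ge> 1"
    and "\<And>d. d < D \<Longrightarrow> w0 d > 0"
    and "\<And>d j. q d j \<ge> 0"
    and "finite I" and "I \<noteq> {}"
    and "\<And>k. k \<in> I \<Longrightarrow> length k = D"
    and "length x = D"
  shows "card I \<le> length (Phi_mask q w0 I x)
       \<and> length (Phi_mask q w0 I x) = (\<Sum>k\<in>I. 2 ^ eta k)
       \<and> (\<Sum>k\<in>I. 2 ^ eta k) \<le> length (Phi_full D q w0 I x)
       \<and> length (Phi_full D q w0 I x) \<le> card I * 2 ^ D"
proof -
  have "card I = (\<Sum>k\<in>I. (1::nat))" by simp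
  also have "\<dots> \<le> (\<Sum>k\<in>I. 2 ^ eta k)" by (rule sum_mono) simp
  finally have lower: "card I \<le> (\<Sum>k\<in>I. (2::nat) ^ eta k)" .
  have "(\<Sum>k\<in>I. (2::nat) ^ eta k) \<le> (\<Sum>k\<in>I. 2 ^ D)"
    by (rule sum_mono) (metis assms(6) eta_le_length one_le_numeral power_increasing)
  then have upper: "(\<Sum>k\<in>I. (2::nat) ^ eta k) \<le> card I * 2 ^ D" by simp
  show ?thesis
    using lower upper length_Phi_mask[OF assms(4)] length_Phi_full[OF assms(4,1)] by simp
qed

end
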